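(* Let $n\ge 4$ and $Q=\{0,\dots,n-1\}$. Then $\mathbf{W}_{\mathrm{sf}}(n)$ is the unique maximal semigroup of a suffix-free language in which no two states from $\{1,\dots,n-2\}$ are colliding; that is, $\mathbf{W}_{\mathrm{sf}}(n)$ is the transition semigroup of a minimal DFA (with state set $Q$, initial state $0$, empty state $n-1$) accepting a suffix-free language, no two states of $\{1,\dots,n-2\}$ collide in it, and every transition semigroup $T$ of such a DFA in which no two states of $\{1,\dots,n-2\}$ collide satisfies $T\subseteq\mathbf{W}_{\mathrm{sf}}(n)$.
   Context: A language $L$ is suffix-free if whenever $w\in L$ and $u\in L$ with $u$ a suffix of $w$, then $u=w$. Transformations act on the right ($qt$ is the image of $q$ under $t$). The transition semigroup of a DFA is the semigroup of transformations of its state set generated by the transformations induced by its letters. A minimal complete DFA of a suffix-free language with $n\ge2$ states has exactly one empty state (a state from which no final state is reachable); the states are labeled $Q=\{0,\dots,n-1\}$ with $0$ initial and $n-1$ empty. For a semigroup $T$ of transformations of $Q$, an unordered pair $\{p,q\}$ of distinct states of $Q\setminus\{0,n-1\}$ is colliding in $T$ if there exist $t\in T$ and $r\in Q\setminus\{0,n-1\}$ with $0t=p$ and $rt=q$. Define $\mathbf{B}_{\mathrm{sf}}(n)=\{t:Q\to Q \mid 0\notin Qt,\ (n-1)t=n-1,\ \text{and for all } j\ge1:\ 0t^j=n-1 \text{ or } 0t^j\neq qt^j \text{ for all } 0<q<n-1\}$ and $\mathbf{W}_{\mathrm{sf}}(n)=\{t\in\mathbf{B}_{\mathrm{sf}}(n)\mid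 0t=n-1 \text{ or } qt=n-1 \text{ for all } 1\le q\le n-2\}$. *)

theory Defs
  imports Main "HOL-Library.Sublist"
begin

text \<open>States are the naturals 0..n-1. A transformation of Q = {0..<n} is represented
 canonically as a function nat => nat mapping Q into Q and fixing every number >= n.
 Transformations act on the right: the word a1...ak maps q to delta ak (... (delta a1 q)).\<close>

definition is_transf :: "nat \<Rightarrow> (nat \<Rightarrow> nat) \<Rightarrow> bool" where
  "is_transf n t \<longleftrightarrow> (\<forall>q<n. t q < n) \<and> (\<forall>q. n \<le> q \<longrightarrow> t q = q)"

fun dw :: "('a \<Rightarrow> nat \<Rightarrow> nat) \<Rightarrow> 'a list \<Rightarrow> nat \<Rightarrow> nat" where
  "dw \<delta> [] = id"
| "dw \<delta> (a # w) = dw \<delta> w \<circ> \<delta> a"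

definition is_dfa :: "nat \<Rightarrow> 'a set \<Rightarrow> ('a \<Rightarrow> nat \<Rightarrow> nat) \<Rightarrow> nat set \<Rightarrow> bool" where
  "is_dfa n \<Sigma> \<delta> F \<longleftrightarrow> 0 < n \<and> finite \<Sigma> \<and> \<Sigma> \<noteq> {} \<and> F \<subseteq> {..<n} \<and> (\<forall>a\<in>\<Sigma>. is_transf n (\<delta> a))"

definition dfa_lang :: "'a set \<Rightarrow> ('a \<Rightarrow> nat \<Rightarrow> nat) \<Rightarrow> nat set \<Rightarrow> 'a list set" where
  "dfa_lang \<Sigma> \<delta> F = {w. w \<in> lists \<Sigma> \<and> dw \<delta> w 0 \<in> F}"

definition minimal_dfa :: "nat \<Rightarrow> 'a set \<Rightarrow> ('a \<Rightarrow> nat \<Rightarrow> nat) \<Rightarrow> nat set \<Rightarrow> bool" where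
  "minimal_dfa n \<Sigma> \<delta> F \<longleftrightarrow> is_dfa n \<Sigma> \<delta> F
     \<and> (\<forall>q<n. \<exists>w\<in>lists \<Sigma>. dw \<delta> w 0 = q)
     \<and> (\<forall>p<n. \<forall>q<n. p \<noteq> q \<longrightarrow> (\<exists>w\<in>lists \<Sigma>. (dw \<delta> w p \<in> F) \<noteq> (dw \<delta> w q \<in> F)))"

definition empty_state :: "'a set \<Rightarrow> ('a \<Rightarrow> nat \<Rightarrow> nat) \<Rightarrow> nat set \<Rightarrow> nat \<Rightarrow> bool" where
  "empty_state \<Sigma> \<delta> F q \<longleftrightarrow> (\<forall>w\<in>lists \<Sigma>. dw \<delta> w q \<notin> F)"

definition suffix_free :: "'a list set \<Rightarrow> bool" where
  "suffix_free L \<longleftrightarrow> (\<forall>w\<in>L. \<forall>u\<in>L. suffix u w \<longrightarrow> u = w)"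

definition min_sf_dfa :: "nat \<Rightarrow> 'a set \<Rightarrow> ('a \<Rightarrow> nat \<Rightarrow> nat) \<Rightarrow> nat set \<Rightarrow> bool" where
  "min_sf_dfa n \<Sigma> \<delta> F \<longleftrightarrow> minimal_dfa n \<Sigma> \<delta> F \<and> empty_state \<Sigma> \<delta> F (n - 1)
     \<and> suffix_free (dfa_lang \<Sigma> \<delta> F)"

definition trans_sg :: "'a set \<Rightarrow> ('a \<Rightarrow> nat \<Rightarrow> nat) \<Rightarrow> (nat \<Rightarrow> nat) set" where
  "trans_sg \<Sigma> \<delta> = {dw \<delta> w | w. w \<in> lists \<Sigma> \<and> w \<noteq> []}"

definition colliding :: "nat \<Rightarrow> (nat \<Rightarrow> nat) set \<Rightarrow> nat \<Rightarrow> nat \<Rightarrow> bool" where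
  "colliding n T p q \<longleftrightarrow> p \<noteq> q \<and> p \<in> {1..n-2} \<and> q \<in> {1..n-2} \<and>
     ((\<exists>t\<in>T. \<exists>r\<in>{1..n-2}. t 0 = p \<and> t r = q) \<or> (\<exists>t\<in>T. \<exists>r\<in>{1..n-2}. t 0 = q \<and> t r = p))"

definition no_colliding :: "nat \<Rightarrow> (nat \<Rightarrow> nat) set \<Rightarrow> bool" where
  "no_colliding n T \<longleftrightarrow> (\<forall>p q. \<not> colliding n T p q)"

definition B_sf :: "nat \<Rightarrow> (nat \<Rightarrow> nat) set" where
  "B_sf n = {t. is_transf n t \<and> (\<forall>q<n. t q \<noteq> 0) \<and> t (n - 1) = n - 1 \<and>
     (\<forall>j\<ge>1. (t ^^ j) 0 = n - 1 \<or> (\<forall>q. 0 < q \<and> q < n - 1 \<longrightarrow> (t ^^ j) 0 \<noteq> (t ^^ j) q))}"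

definition W_sf :: "nat \<Rightarrow> (nat \<Rightarrow> nat) set" where
  "W_sf n = {t \<in> B_sf n. t 0 = n - 1 \<or> (\<forall>q. 1 \<le> q \<and> q \<le> n - 2 \<longrightarrow> t q = n - 1)}"

end

theory Submission
  imports Defs "HOL-Library.FuncSet"
begin

text \<open>A transformation in \<open>W_sf n\<close> either sends the initial state to the empty state
  \<open>n - 1\<close> or sends every other state there, and such transformations are closed under
  composition. So a word accepted from the initial state kills every other state, and no word
  \<open>v u\<close> with \<open>v\<close> nonempty is accepted along with \<open>u\<close>: the DFA whose letters are all of
  \<open>W_sf n\<close>, with final state 1, is suffix-free, and no collision can occur in it. Conversely,
  in a minimal suffix-free DFA a nonempty word \<open>v\<close> reaching a state that a word \<open>w\<close> merges
  with the image of the initial state would make both \<open>w z\<close> and \<open>v w z\<close> accepted; so if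
  \<open>t\<close> keeps the initial state alive, any middle state not sent to \<open>n - 1\<close> collides with it.\<close>

lemma dw_append: "dw \<delta> (u @ v) q = dw \<delta> v (dw \<delta> u q)"
proof -
  have "dw \<delta> (u @ v) = dw \<delta> v \<circ> dw \<delta> u"
    by (induction u) auto
  then show ?thesis by simp
qed

lemma is_transf_comp: "is_transf n s \<Longrightarrow> is_transf n t \<Longrightarrow> is_transf n (t \<circ> s)"
  unfolding is_transf_def by auto

lemma is_transf_dw:
  assumes "\<forall>a\<in>\<Sigma>. is_transf n (\<delta> a)" "w \<in> lists \<Sigma>"
  shows "is_transf n (dw \<delta> w)"
  using assms(2)
proof (induction w)
  case (Cons a w)
  then have "is_transf n (dw \<delta> w \<circ> \<delta> a)"
    using assms(1) is_transf_comp by auto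
  then show ?case by (simp only: dw.simps)
qed (simp add: is_transf_def)

lemma finite_is_transf: "finite {t. is_transf n t}"
proof (rule finite_imageD)
  let ?T = "{t. is_transf n t}"
  show "inj_on (\<lambda>t. restrict t {..<n}) ?T"
  proof (rule inj_onI)
    fix s t assume "s \<in> ?T" "t \<in> ?T" and eq: "restrict s {..<n} = restrict t {..<n}"
    show "s = t"
    proof
      fix x
      show "s x = t x"
      proof (cases "x < n")
        case True
        then show ?thesis using fun_cong[OF eq, of x] by simp
      next
        case False
        then show ?thesis using \<open>s \<in> ?T\<close> \<open>t \<in> ?T\<close> by (simp add: is_transf_def)
      qed
    qed
  qed
  have "(\<lambda>t. restrict t {..<n}) ` ?T \<subseteq> Pi\<^sub>E {..<n} (\<lambda>_. {..<n})"
    by (intro image_subsetI PiE_I) (auto simp: is_transf_def)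
  then show "finite ((\<lambda>t. restrict t {..<n}) ` ?T)"
    by (rule finite_subset) (simp add: finite_PiE)
qed

lemma funpow_fixpoint_reached:
  assumes "t q = m" "t m = m"
  shows "(t ^^ Suc j) q = m"
  using assms by (induction j) auto

lemma W_sf_iff:
  "t \<in> W_sf n \<longleftrightarrow> is_transf n t \<and> (\<forall>q<n. t q \<noteq> 0) \<and> t (n - 1) = n - 1 \<and>
     (t 0 = n - 1 \<or> (\<forall>q. 1 \<le> q \<and> q \<le> n - 2 \<longrightarrow> t q = n - 1))"
proof -
  have "(t ^^ j) 0 = n - 1 \<or> (\<forall>q. 0 < q \<and> q < n - 1 \<longrightarrow> (t ^^ j) 0 \<noteq> (t ^^ j) q)"
    if "t (n - 1) = n - 1" "t 0 = n - 1 \<or> (\<forall>q. 1 \<le> q \<and> q \<le> n - 2 \<longrightarrow> t q = n - 1)"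
      and "j \<ge> 1" for j
  proof -
    obtain k where k: "j = Suc k" using \<open>j \<ge> 1\<close> by (cases j) auto
    show ?thesis
      using that funpow_fixpoint_reached[of t _ "n - 1" k] unfolding k by fastforce
  qed
  then show ?thesis
    unfolding W_sf_def B_sf_def by blast
qed

lemma W_sf_comp:
  assumes "s \<in> W_sf n" "t \<in> W_sf n"
  shows "t \<circ> s \<in> W_sf n"
  using assms unfolding W_sf_iff is_transf_def by auto

lemma dw_in_W_sf:
  assumes letters: "\<forall>a\<in>\<Sigma>. \<delta> a \<in> W_sf n"
  shows "w \<in> lists \<Sigma> \<Longrightarrow> w \<noteq> [] \<Longrightarrow> dw \<delta> w \<in> W_sf n"
proof (induction w)
  case (Cons a w)
  then have "\<delta> a \<in> W_sf n" using letters by simp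
  then show ?case
    using Cons W_sf_comp[of "\<delta> a" n "dw \<delta> w"] by (cases "w = []") (simp_all add: comp_def)
qed simp

lemma finite_W_sf: "finite (W_sf n)"
  by (rule finite_subset[OF _ finite_is_transf]) (auto simp: W_sf_iff)

lemma W_sf_sinks_states_if_initial_live:
  assumes "t \<in> W_sf n" "t 0 \<noteq> n - 1" "0 < q" "q < n"
  shows "t q = n - 1"
  using assms unfolding W_sf_iff by (cases "q = n - 1") auto

lemma no_colliding_W_sf: "no_colliding n (W_sf n)"
proof -
  have "t r \<notin> {1..n - 2}" if "t \<in> W_sf n" "r \<in> {1..n - 2}" "t 0 \<in> {1..n - 2}" for t r
    using that W_sf_sinks_states_if_initial_live[of t n r] by auto
  then show ?thesis
    unfolding no_colliding_def colliding_def by blast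
qed

definition send_else_sink :: "nat \<Rightarrow> nat \<Rightarrow> nat \<Rightarrow> nat \<Rightarrow> nat" where
  "send_else_sink n p r x = (if x = p then r else if x < n then n - 1 else x)"

lemma send_else_sink_in_W_sf:
  assumes "p < n - 1" "0 < r" "r < n"
  shows "send_else_sink n p r \<in> W_sf n"
  using assms unfolding W_sf_iff is_transf_def send_else_sink_def by auto

lemma dw_fixes_sink:
  assumes "\<forall>a\<in>\<Sigma>. \<delta> a \<in> W_sf n" "w \<in> lists \<Sigma>"
  shows "dw \<delta> w (n - 1) = n - 1"
  using dw_in_W_sf[OF assms(1) assms(2)] by (cases "w = []") (auto simp: W_sf_iff)

lemma empty_state_sink:
  assumes "\<forall>a\<in>\<Sigma>. \<delta> a \<in> W_sf n" "n - 1 \<notin> F"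
  shows "empty_state \<Sigma> \<delta> F (n - 1)"
  using assms dw_fixes_sink unfolding empty_state_def by metis

lemma suffix_free_if_letters_in_W_sf:
  assumes letters: "\<forall>a\<in>\<Sigma>. \<delta> a \<in> W_sf n" and F: "F \<subseteq> {1..n - 2}"
  shows "suffix_free (dfa_lang \<Sigma> \<delta> F)"
  unfolding suffix_free_def
proof (intro ballI impI)
  fix w u assume w: "w \<in> dfa_lang \<Sigma> \<delta> F" and u: "u \<in> dfa_lang \<Sigma> \<delta> F" and "suffix u w"
  then obtain v where wvu: "w = v @ u" unfolding suffix_def by blast
  have F_bounds: "0 \<notin> F" "n - 1 \<notin> F"
    using subsetD[OF F, of 0] subsetD[OF F, of "n - 1"] by auto
  show "u = w"
  proof (rule ccontr)
    assume "u \<noteq> w"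
    then have "v \<noteq> []" using wvu by simp
    have u_acc: "u \<in> lists \<Sigma>" "dw \<delta> u 0 \<in> F" and "v \<in> lists \<Sigma>" and w_acc: "dw \<delta> w 0 \<in> F"
      using u w wvu unfolding dfa_lang_def by auto
    then have "u \<noteq> []" using F_bounds by auto
    have tu: "dw \<delta> u \<in> W_sf n" "dw \<delta> u 0 \<noteq> n - 1"
      using dw_in_W_sf[OF letters u_acc(1) \<open>u \<noteq> []\<close>] u_acc(2) F_bounds by auto
    have tv: "is_transf n (dw \<delta> v)" "\<forall>q<n. dw \<delta> v q \<noteq> 0"
      using dw_in_W_sf[OF letters \<open>v \<in> lists \<Sigma>\<close> \<open>v \<noteq> []\<close>] unfolding W_sf_iff by blast+
    have "dw \<delta> u 0 \<in> {1..n - 2}" using F u_acc(2) by blast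
    then have "0 < n" by auto
    then have "0 < dw \<delta> v 0" "dw \<delta> v 0 < n"
      using tv unfolding is_transf_def by auto
    then have "dw \<delta> w 0 = n - 1"
      using W_sf_sinks_states_if_initial_live[OF tu] by (simp add: wvu dw_append)
    then show False
      using w_acc F_bounds by simp
  qed
qed

lemma trans_sg_eq_W_sf:
  assumes letters: "\<delta> ` \<Sigma> = W_sf n"
  shows "trans_sg \<Sigma> \<delta> = W_sf n"
proof
  show "trans_sg \<Sigma> \<delta> \<subseteq> W_sf n"
  proof
    fix t assume "t \<in> trans_sg \<Sigma> \<delta>"
    then obtain w where "t = dw \<delta> w" "w \<in> lists \<Sigma>" "w \<noteq> []"
      unfolding trans_sg_def by blast
    moreover have "\<forall>a\<in>\<Sigma>. \<delta> a \<in> W_sf n" unfolding letters[symmetric] by blast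
    ultimately show "t \<in> W_sf n" using dw_in_W_sf by blast
  qed
  show "W_sf n \<subseteq> trans_sg \<Sigma> \<delta>"
  proof
    fix t assume "t \<in> W_sf n"
    then have "t \<in> \<delta> ` \<Sigma>" using letters by simp
    then obtain a where "a \<in> \<Sigma>" "\<delta> a = t" by blast
    then show "t \<in> trans_sg \<Sigma> \<delta>"
      unfolding trans_sg_def by (intro CollectI exI[of _ "[a]"]) auto
  qed
qed

lemma word_for_send_else_sink:
  assumes letters: "W_sf n \<subseteq> \<delta> ` \<Sigma>" and "p < n - 1" "0 < r" "r < n"
  shows "\<exists>w\<in>lists \<Sigma>. dw \<delta> w = send_else_sink n p r"
proof -
  have "send_else_sink n p r \<in> \<delta> ` \<Sigma>"
    using subsetD[OF letters send_else_sink_in_W_sf[OF assms(2-4)]] .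
  then obtain a where "a \<in> \<Sigma>" "\<delta> a = send_else_sink n p r" by (rule imageE) simp
  then have "[a] \<in> lists \<Sigma>" "dw \<delta> [a] = send_else_sink n p r" by simp_all
  then show ?thesis by blast
qed

lemma reachable_if_letters_include_W_sf:
  assumes "W_sf n \<subseteq> \<delta> ` \<Sigma>" "q < n"
  shows "\<exists>w\<in>lists \<Sigma>. dw \<delta> w 0 = q"
proof (cases "q = 0")
  case True
  then show ?thesis by (intro bexI[of _ "[]"]) auto
next
  case False
  then obtain w where "w \<in> lists \<Sigma>" "dw \<delta> w = send_else_sink n 0 q"
    using word_for_send_else_sink[OF assms(1), of 0 q] assms(2) by auto
  then show ?thesis by (intro bexI[of _ w]) (simp_all add: send_else_sink_def)
qed

lemma separating_word_if_letters_include_W_sf: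
  assumes "W_sf n \<subseteq> \<delta> ` \<Sigma>" "n \<ge> 3" "p < n - 1" "q < n" "p \<noteq> q"
  shows "\<exists>w\<in>lists \<Sigma>. (dw \<delta> w p \<in> {1}) \<noteq> (dw \<delta> w q \<in> {1})"
proof -
  obtain w where "w \<in> lists \<Sigma>" "dw \<delta> w = send_else_sink n p 1"
    using word_for_send_else_sink[OF assms(1), of p 1] assms(2,3) by auto
  then show ?thesis
    using assms(2-5) by (intro bexI[of _ w]) (simp_all add: send_else_sink_def)
qed

lemma min_sf_dfa_if_letters_eq_W_sf:
  assumes n: "n \<ge> 4" and "finite \<Sigma>" and letters: "\<delta> ` \<Sigma> = W_sf n"
  shows "min_sf_dfa n \<Sigma> \<delta> {1}"
proof -
  have in_W: "\<forall>a\<in>\<Sigma>. \<delta> a \<in> W_sf n" unfolding letters[symmetric] by blast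
  have all_W: "W_sf n \<subseteq> \<delta> ` \<Sigma>" using letters by simp
  have "is_dfa n \<Sigma> \<delta> {1}"
  proof -
    have "\<Sigma> \<noteq> {}"
      using reachable_if_letters_include_W_sf[OF all_W, of 1] n by auto
    then show ?thesis
      unfolding is_dfa_def using n \<open>finite \<Sigma>\<close> in_W by (auto simp: W_sf_iff)
  qed
  moreover have "\<exists>w\<in>lists \<Sigma>. (dw \<delta> w p \<in> {1}) \<noteq> (dw \<delta> w q \<in> {1})"
    if states: "p < n" "q < n" "p \<noteq> q" for p q
  proof (cases "p = n - 1")
    case True
    then obtain w where "w \<in> lists \<Sigma>" "(dw \<delta> w q \<in> {1}) \<noteq> (dw \<delta> w p \<in> {1})"
      using separating_word_if_letters_include_W_sf[OF all_W, of q p] states n by fastforce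
    then show ?thesis by blast
  next
    case False
    then show ?thesis
      using separating_word_if_letters_include_W_sf[OF all_W, of p q] states n by simp
  qed
  moreover have "empty_state \<Sigma> \<delta> {1} (n - 1)"
    using empty_state_sink[OF in_W] n by auto
  moreover have "suffix_free (dfa_lang \<Sigma> \<delta> {1})"
    using suffix_free_if_letters_in_W_sf[OF in_W] n by auto
  ultimately show ?thesis
    using reachable_if_letters_include_W_sf[OF all_W]
    unfolding min_sf_dfa_def minimal_dfa_def by blast
qed

lemma W_sf_is_trans_sg_of_min_sf_dfa:
  assumes "n \<ge> 4"
  shows "\<exists>(\<Sigma>::nat set) \<delta> F. min_sf_dfa n \<Sigma> \<delta> F \<and> trans_sg \<Sigma> \<delta> = W_sf n"
proof -
  obtain h where "bij_betw h {0..<card (W_sf n)} (W_sf n)"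
    using ex_bij_betw_nat_finite[OF finite_W_sf] by blast
  then have letters: "h ` {0..<card (W_sf n)} = W_sf n"
    by (simp add: bij_betw_def)
  have "min_sf_dfa n {0..<card (W_sf n)} h {1}"
    using min_sf_dfa_if_letters_eq_W_sf[OF assms finite_atLeastLessThan letters] .
  moreover have "trans_sg {0..<card (W_sf n)} h = W_sf n"
    using trans_sg_eq_W_sf[OF letters] .
  ultimately show ?thesis by blast
qed

context
  fixes n :: nat and \<Sigma> :: "'a set" and \<delta> :: "'a \<Rightarrow> nat \<Rightarrow> nat" and F :: "nat set"
  assumes dfa: "min_sf_dfa n \<Sigma> \<delta> F" and n: "n \<ge> 2"
begin

lemma min_sf_dfa_transf: "w \<in> lists \<Sigma> \<Longrightarrow> is_transf n (dw \<delta> w)"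
  using dfa is_transf_dw unfolding min_sf_dfa_def minimal_dfa_def is_dfa_def by blast

lemma min_sf_dfa_reachable: "q < n \<Longrightarrow> \<exists>w\<in>lists \<Sigma>. dw \<delta> w 0 = q"
  using dfa unfolding min_sf_dfa_def minimal_dfa_def by blast

lemma min_sf_dfa_distinguishable:
  "p < n \<Longrightarrow> q < n \<Longrightarrow> p \<noteq> q \<Longrightarrow> \<exists>w\<in>lists \<Sigma>. (dw \<delta> w p \<in> F) \<noteq> (dw \<delta> w q \<in> F)"
  using dfa unfolding min_sf_dfa_def minimal_dfa_def by blast

lemma min_sf_dfa_sink_empty: "z \<in> lists \<Sigma> \<Longrightarrow> dw \<delta> z (n - 1) \<notin> F"
  using dfa unfolding min_sf_dfa_def empty_state_def by blast

lemma min_sf_dfa_suffix_free: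
  assumes "u \<in> dfa_lang \<Sigma> \<delta> F" "v @ u \<in> dfa_lang \<Sigma> \<delta> F"
  shows "v = []"
proof -
  have "suffix u (v @ u)" unfolding suffix_def by blast
  then have "u = v @ u"
    using dfa assms unfolding min_sf_dfa_def suffix_free_def by blast
  then show ?thesis by simp
qed

lemma min_sf_dfa_empty_state_unique:
  assumes "q < n" "empty_state \<Sigma> \<delta> F q"
  shows "q = n - 1"
proof (rule ccontr)
  assume "q \<noteq> n - 1"
  then obtain z where "z \<in> lists \<Sigma>" "(dw \<delta> z q \<in> F) \<noteq> (dw \<delta> z (n - 1) \<in> F)"
    using min_sf_dfa_distinguishable[of q "n - 1"] assms(1) n by auto
  then show False
    using assms(2) min_sf_dfa_sink_empty unfolding empty_state_def by blast
qed

lemma min_sf_dfa_live_state: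
  assumes "q < n" "q \<noteq> n - 1"
  shows "\<exists>z\<in>lists \<Sigma>. dw \<delta> z q \<in> F"
  using assms min_sf_dfa_empty_state_unique unfolding empty_state_def by blast

lemma min_sf_dfa_sink_fixed:
  assumes "w \<in> lists \<Sigma>"
  shows "dw \<delta> w (n - 1) = n - 1"
proof -
  have "empty_state \<Sigma> \<delta> F (dw \<delta> w (n - 1))"
    unfolding empty_state_def
  proof
    fix z assume "z \<in> lists \<Sigma>"
    then have "dw \<delta> (w @ z) (n - 1) \<notin> F"
      using assms min_sf_dfa_sink_empty by simp
    then show "dw \<delta> z (dw \<delta> w (n - 1)) \<notin> F" by (simp add: dw_append)
  qed
  moreover have "dw \<delta> w (n - 1) < n"
    using min_sf_dfa_transf[OF assms] n unfolding is_transf_def by simp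
  ultimately show ?thesis
    using min_sf_dfa_empty_state_unique by blast
qed

lemma min_sf_dfa_initial_not_reentered:
  assumes "w \<in> lists \<Sigma>" "w \<noteq> []"
  shows "dw \<delta> w 0 \<noteq> 0"
proof
  assume "dw \<delta> w 0 = 0"
  obtain z where z: "z \<in> lists \<Sigma>" "dw \<delta> z 0 \<in> F"
    using min_sf_dfa_live_state[of 0] n by auto
  then have "z \<in> dfa_lang \<Sigma> \<delta> F" "w @ z \<in> dfa_lang \<Sigma> \<delta> F"
    using assms \<open>dw \<delta> w 0 = 0\<close> unfolding dfa_lang_def by (auto simp: dw_append)
  then show False
    using min_sf_dfa_suffix_free assms(2) by blast
qed

lemma min_sf_dfa_initial_not_merged:
  assumes "w \<in> lists \<Sigma>" "0 < r" "r < n" "dw \<delta> w 0 \<noteq> n - 1"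
  shows "dw \<delta> w r \<noteq> dw \<delta> w 0"
proof
  assume merged: "dw \<delta> w r = dw \<delta> w 0"
  obtain v where v: "v \<in> lists \<Sigma>" "dw \<delta> v 0 = r"
    using min_sf_dfa_reachable assms(3) by blast
  then have "v \<noteq> []" using assms(2) by auto
  have "dw \<delta> w 0 < n"
    using min_sf_dfa_transf[OF assms(1)] n unfolding is_transf_def by simp
  then obtain z where z: "z \<in> lists \<Sigma>" "dw \<delta> z (dw \<delta> w 0) \<in> F"
    using min_sf_dfa_live_state assms(4) by blast
  then have "w @ z \<in> dfa_lang \<Sigma> \<delta> F" "v @ w @ z \<in> dfa_lang \<Sigma> \<delta> F"
    using assms(1) v merged unfolding dfa_lang_def by (auto simp: dw_append)
  then show False
    using min_sf_dfa_suffix_free \<open>v \<noteq> []\<close> by blast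
qed

lemma min_sf_dfa_initial_not_hit:
  assumes "w \<in> lists \<Sigma>" "w \<noteq> []" "q < n"
  shows "dw \<delta> w q \<noteq> 0"
proof -
  obtain v where "v \<in> lists \<Sigma>" "dw \<delta> v 0 = q"
    using min_sf_dfa_reachable assms(3) by blast
  then show ?thesis
    using min_sf_dfa_initial_not_reentered[of "v @ w"] assms by (simp add: dw_append)
qed

lemma trans_sg_subset_W_sf_if_no_colliding:
  assumes no_coll: "no_colliding n (trans_sg \<Sigma> \<delta>)"
  shows "trans_sg \<Sigma> \<delta> \<subseteq> W_sf n"
proof
  fix t assume "t \<in> trans_sg \<Sigma> \<delta>"
  then obtain w where t: "t = dw \<delta> w" and w: "w \<in> lists \<Sigma>" "w \<noteq> []"
    unfolding trans_sg_def by blast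
  have "t 0 = n - 1 \<or> (\<forall>q. 1 \<le> q \<and> q \<le> n - 2 \<longrightarrow> t q = n - 1)"
  proof (rule ccontr)
    assume "\<not> ?thesis"
    then obtain r where "t 0 \<noteq> n - 1" "1 \<le> r" "r \<le> n - 2" "t r \<noteq> n - 1" by auto
    moreover have "t r \<noteq> t 0"
      using min_sf_dfa_initial_not_merged[OF w(1)] calculation n unfolding t by simp
    moreover have "t 0 < n" "t r < n" "t 0 \<noteq> 0" "t r \<noteq> 0"
      using min_sf_dfa_transf[OF w(1)] min_sf_dfa_initial_not_hit[OF w] calculation n
      unfolding t is_transf_def by auto
    ultimately have "colliding n (trans_sg \<Sigma> \<delta>) (t 0) (t r)"
      unfolding colliding_def using \<open>t \<in> trans_sg \<Sigma> \<delta>\<close> by force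
    then show False using no_coll unfolding no_colliding_def by blast
  qed
  then show "t \<in> W_sf n"
    unfolding W_sf_iff t
    using min_sf_dfa_transf min_sf_dfa_initial_not_hit min_sf_dfa_sink_fixed w by blast
qed

end

theorem proposition3:
  fixes n :: nat
  assumes "n \<ge> 4"
  shows "(\<exists>(\<Sigma>::nat set) \<delta> F. min_sf_dfa n \<Sigma> \<delta> F \<and> trans_sg \<Sigma> \<delta> = W_sf n
            \<and> no_colliding n (trans_sg \<Sigma> \<delta>))
       \<and> (\<forall>(\<Sigma>::'a set) \<delta> F. min_sf_dfa n \<Sigma> \<delta> F \<and> no_colliding n (trans_sg \<Sigma> \<delta>)
            \<longrightarrow> trans_sg \<Sigma> \<delta> \<subseteq> W_sf n)"
proof (intro conjI allI impI)
  obtain \<Sigma> :: "nat set" and \<delta> F where "min_sf_dfa n \<Sigma> \<delta> F" "trans_sg \<Sigma> \<delta> = W_sf n"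
    using W_sf_is_trans_sg_of_min_sf_dfa[OF assms] by blast
  then show "\<exists>(\<Sigma>::nat set) \<delta> F. min_sf_dfa n \<Sigma> \<delta> F \<and> trans_sg \<Sigma> \<delta> = W_sf n
      \<and> no_colliding n (trans_sg \<Sigma> \<delta>)"
    by (intro exI[of _ \<Sigma>] exI[of _ \<delta>] exI[of _ F]) (simp add: no_colliding_W_sf)
next
  fix \<Sigma> :: "'a set" and \<delta> F
  assume "min_sf_dfa n \<Sigma> \<delta> F \<and> no_colliding n (trans_sg \<Sigma> \<delta>)"
  then show "trans_sg \<Sigma> \<delta> \<subseteq> W_sf n"
    using trans_sg_subset_W_sf_if_no_colliding[of n \<Sigma> \<delta> F] assms by simp
qed

end
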